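(* Let $n\ge2$ be an integer and $\lambda>0$, and let $\gamma(t)=(\omega(t),x(t),y(t))$ be a solution with $\omega>0$ of the system $$\frac{d\omega}{dt}=x\omega,\qquad \frac{dx}{dt}=x^2-xy+n-1-\lambda\omega^2,\qquad \frac{dy}{dt}=xy-nx^2-\lambda\omega^2,$$ defined on the maximal interval $(S,\infty)$, such that $\int_{t_0}^\infty\omega(\sigma)\,d\sigma=\infty$ for every $t_0\in(S,\infty)$ and $-1<x(t)<1$ for all $t\in(S,\infty)$. Then $\lim_{t\to\infty}y(t)=-\infty$. *)

theory Defs
  imports "HOL-Analysis.Analysis"
begin

definition ray :: "ereal \<Rightarrow> real set" where
  "ray S = {t. S < ereal t}"

definition is_solution ::
  "nat \<Rightarrow> real \<Rightarrow> (real \<Rightarrow> real) \<Rightarrow> (real \<Rightarrow> real) \<Rightarrow> (real \<Rightarrow> real) \<Rightarrow> real set \<Rightarrow> bool" where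
  "is_solution n lam w x y D \<longleftrightarrow>
     (\<forall>t\<in>D.
        (w has_real_derivative (x t * w t)) (at t) \<and>
        (x has_real_derivative (x t ^ 2 - x t * y t + real n - 1 - lam * w t ^ 2)) (at t) \<and>
        (y has_real_derivative (x t * y t - real n * x t ^ 2 - lam * w t ^ 2)) (at t))"

definition maximal_solution ::
  "nat \<Rightarrow> real \<Rightarrow> (real \<Rightarrow> real) \<Rightarrow> (real \<Rightarrow> real) \<Rightarrow> (real \<Rightarrow> real) \<Rightarrow> ereal \<Rightarrow> bool" where
  "maximal_solution n lam w x y S \<longleftrightarrow>
     is_solution n lam w x y (ray S) \<and>
     (\<forall>T w' x' y'. T < S \<longrightarrow> is_solution n lam w' x' y' (ray T) \<longrightarrow>
        \<not> (\<forall>t\<in>ray S. w' t = w t \<and> x' t = x t \<and> y' t = y t))"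

end

theory Submission
  imports Defs
begin

(*
  The ratio y/w satisfies (y/w)' = -(n x^2 + lam w^2)/w <= -lam w, so the divergence of the
  integral of w forces y/w -> -infinity; in particular y < 0 eventually. It remains to bound w
  from below. Once y < 0, a small w forces x < 0: otherwise x' > 1/2 while w grows at most like
  e^t, so x would reach 1. Hence a small w keeps decreasing, and then the Lyapunov function
  -y - x + (n - 1) ln w decreases at rate (n - 1)/2, so w decays exponentially and its integral
  converges, a contradiction. Thus w is eventually bounded below and y = (y/w) w -> -infinity.
*)

lemma nn_integral_Icc_le_by_antiderivative:
  fixes w g G :: "real \<Rightarrow> real"
  assumes "a \<le> b" and cont: "continuous_on {a..b} w"
    and nonneg: "\<And>s. s \<in> {a..b} \<Longrightarrow> 0 \<le> w s"
    and le: "\<And>s. s \<in> {a..b} \<Longrightarrow> w s \<le> g s"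
    and deriv: "\<And>s. s \<in> {a..b} \<Longrightarrow> (G has_real_derivative g s) (at s)"
  shows "(\<integral>\<^sup>+ s. ennreal (w s) * indicator {a..b} s \<partial>lborel) \<le> ennreal (G b - G a)"
proof -
  have g_int: "(g has_integral (G b - G a)) {a..b}"
    using \<open>a \<le> b\<close> deriv by (intro fundamental_theorem_of_calculus)
      (auto simp: has_real_derivative_iff_has_vector_derivative[symmetric]
        intro: has_field_derivative_at_within)
  have w_int: "(w has_integral integral {a..b} w) {a..b}"
    using cont by (intro integrable_integral integrable_continuous_interval)
  have "(\<integral>\<^sup>+ s. ennreal (w s) * indicator {a..b} s \<partial>lborel) = ennreal (integral {a..b} w)"
    by (rule nn_integral_has_integral_lebesgue'[OF _ w_int]) (use nonneg in auto)
  also have "integral {a..b} w \<le> G b - G a"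
    by (rule has_integral_le[OF w_int g_int]) (use le in auto)
  finally show ?thesis
    by (simp add: ennreal_leI)
qed

lemma nn_integral_Ici_finite_by_antiderivative:
  fixes w g G :: "real \<Rightarrow> real"
  assumes cont: "continuous_on {a..} w"
    and nonneg: "\<And>s. a \<le> s \<Longrightarrow> 0 \<le> w s"
    and le: "\<And>s. a \<le> s \<Longrightarrow> w s \<le> g s"
    and deriv: "\<And>s. a \<le> s \<Longrightarrow> (G has_real_derivative g s) (at s)"
    and bounded: "\<And>s. a \<le> s \<Longrightarrow> G s \<le> B"
  shows "(\<integral>\<^sup>+ s. ennreal (w s) * indicator {a..} s \<partial>lborel) \<noteq> \<infinity>"
proof -
  define f where "f = (\<lambda>(i::nat) s. ennreal (w s) * indicator {a..a + real i} s)"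
  have "incseq f"
    unfolding incseq_def f_def le_fun_def
    by (auto intro!: mult_left_mono simp: split: split_indicator)
  moreover have "f i \<in> borel_measurable lborel" for i
  proof -
    have "(\<lambda>s. indicator {a..a + real i} s *\<^sub>R w s) \<in> borel_measurable borel"
      by (rule borel_measurable_continuous_on_indicator) (auto intro: continuous_on_subset[OF cont])
    then have "(\<lambda>s. ennreal (indicator {a..a + real i} s *\<^sub>R w s)) \<in> borel_measurable borel"
      by measurable
    moreover have "(\<lambda>s. ennreal (indicator {a..a + real i} s *\<^sub>R w s)) = f i"
      unfolding f_def by (auto split: split_indicator)
    ultimately show ?thesis
      by simp
  qed
  moreover have "(\<lambda>i. f i s) \<longlonglongrightarrow> ennreal (w s) * indicator {a..} s" for s
  proof (rule tendsto_eventually)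
    obtain N :: nat where "s - a \<le> real N"
      using real_arch_simple by blast
    then show "\<forall>\<^sub>F i in sequentially. f i s = ennreal (w s) * indicator {a..} s"
      unfolding f_def eventually_sequentially
      by (intro exI[of _ N]) (auto split: split_indicator)
  qed
  ultimately have "(\<lambda>i. integral\<^sup>N lborel (f i))
      \<longlonglongrightarrow> (\<integral>\<^sup>+ s. ennreal (w s) * indicator {a..} s \<partial>lborel)"
    by (rule nn_integral_LIMSEQ)
  moreover have "integral\<^sup>N lborel (f i) \<le> ennreal (B - G a)" for i
  proof -
    have "integral\<^sup>N lborel (f i) \<le> ennreal (G (a + real i) - G a)"
      unfolding f_def using cont nonneg le deriv
      by (intro nn_integral_Icc_le_by_antiderivative[where g = g]) (auto intro: continuous_on_subset)
    also have "\<dots> \<le> ennreal (B - G a)"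
      using bounded[of "a + real i"] by (simp add: ennreal_leI)
    finally show ?thesis .
  qed
  ultimately have "(\<integral>\<^sup>+ s. ennreal (w s) * indicator {a..} s \<partial>lborel) \<le> ennreal (B - G a)"
    by (intro LIMSEQ_le_const2) auto
  then show ?thesis
    by (auto simp: top_unique)
qed

lemma nn_integral_Ici_finite_if_exp_decay:
  fixes w :: "real \<Rightarrow> real"
  assumes "continuous_on {a..} w" and "k > 0"
    and "\<And>s. a \<le> s \<Longrightarrow> 0 \<le> w s"
    and "\<And>s. a \<le> s \<Longrightarrow> w s \<le> C * exp (- k * (s - a))"
  shows "(\<integral>\<^sup>+ s. ennreal (w s) * indicator {a..} s \<partial>lborel) \<noteq> \<infinity>"
proof (rule nn_integral_Ici_finite_by_antiderivative[OF assms(1,3,4)])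
  show "((\<lambda>s. - C / k * exp (- k * (s - a))) has_real_derivative C * exp (- k * (s - a))) (at s)" for s
    using \<open>k > 0\<close> by (auto intro!: derivative_eq_intros simp: field_simps)
  have "C \<ge> 0"
    using assms(3,4)[of a] by simp
  then show "- C / k * exp (- k * (s - a)) \<le> 0" for s
    using \<open>k > 0\<close> by simp
qed

lemma DERIV_nonneg_barrier:
  fixes f f' :: "real \<Rightarrow> real"
  assumes "a \<le> b" and deriv: "\<And>s. s \<in> {a..b} \<Longrightarrow> (f has_real_derivative f' s) (at s)"
    and pos: "\<And>s. s \<in> {a..<b} \<Longrightarrow> f s \<ge> 0 \<Longrightarrow> f' s > 0" and "f a \<ge> 0"
  shows "f b \<ge> 0"
proof (rule ccontr)
  assume "\<not> f b \<ge> 0"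
  define Z where "Z = {r \<in> {a..b}. 0 \<le> f r}"
  have "continuous_on {a..b} f"
    using deriv by (intro continuous_at_imp_continuous_on) (meson DERIV_isCont)
  then have "closed Z"
    unfolding Z_def by (intro continuous_on_closed_Collect_le continuous_on_const) auto
  moreover have "Z \<noteq> {}" and bdd: "bdd_above Z"
    using \<open>f a \<ge> 0\<close> \<open>a \<le> b\<close> by (auto simp: Z_def bdd_above_def)
  ultimately have "Sup Z \<in> Z"
    by (intro closed_contains_Sup)
  define r where "r = Sup Z"
  have r: "a \<le> r" "r \<le> b" "f r \<ge> 0"
    using \<open>Sup Z \<in> Z\<close> by (auto simp: Z_def r_def)
  with \<open>\<not> f b \<ge> 0\<close> have "r < b"
    by (cases "r = b") auto
  with r pos have "f' r > 0"
    by auto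
  then obtain d where "d > 0" and d: "\<And>h. h > 0 \<Longrightarrow> h < d \<Longrightarrow> f r < f (r + h)"
    using DERIV_pos_inc_right[OF deriv] r by (metis atLeastAtMost_iff)
  define h where "h = min (d / 2) ((b - r) / 2)"
  have h: "0 < h" "h < d" "r + h \<le> b"
    using \<open>d > 0\<close> \<open>r < b\<close> by (auto simp: h_def min_def field_simps)
  with d r have "r + h \<in> Z"
    by (fastforce simp: Z_def)
  then have "r + h \<le> r"
    unfolding r_def by (rule cSup_upper[OF _ bdd])
  with h show False
    by simp
qed

lemma DERIV_le_self_imp_exp_bound:
  fixes f f' :: "real \<Rightarrow> real"
  assumes "t \<le> s"
    and "\<And>r. t \<le> r \<Longrightarrow> r \<le> s \<Longrightarrow> (f has_real_derivative f' r) (at r) \<and> f' r \<le> f r"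
  shows "f s \<le> f t * exp (s - t)"
proof -
  have "f s * exp (- s) \<le> f t * exp (- t)"
  proof (rule DERIV_nonpos_imp_nonincreasing[where f = "\<lambda>r. f r * exp (- r)", OF \<open>t \<le> s\<close>])
    fix r assume "t \<le> r" "r \<le> s"
    with assms(2) have "(f has_real_derivative f' r) (at r)" "f' r \<le> f r"
      by auto
    then show "\<exists>d. ((\<lambda>r. f r * exp (- r)) has_real_derivative d) (at r) \<and> d \<le> 0"
      by (intro exI[of _ "(f' r - f r) * exp (- r)"])
        (auto intro!: derivative_eq_intros simp: algebra_simps)
  qed
  then have "f s * exp (- s) * exp s \<le> f t * exp (- t) * exp s"
    by simp
  then show ?thesis
    by (simp add: exp_diff exp_minus field_simps)
qed

text \<open>If \<open>ray S\<close> were empty, every solution on a ray would extend the given one;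
  \<open>(c, 0, -(n - 1) t)\<close> with \<open>lam c\<^sup>2 = n - 1\<close> is such a solution.\<close>
lemma maximal_solution_ray_nonempty:
  assumes "maximal_solution n lam w x y S" and "n \<ge> 1" and "lam > 0"
  shows "ray S \<noteq> {}"
proof
  assume "ray S = {}"
  define c where "c = sqrt ((real n - 1) / lam)"
  have "is_solution n lam (\<lambda>_. c) (\<lambda>_. 0) (\<lambda>t. - (real n - 1) * t) (ray (-\<infinity>))"
    using assms(2,3) by (auto simp: is_solution_def c_def intro!: derivative_eq_intros)
  moreover have "-\<infinity> < S"
    using \<open>ray S = {}\<close> by (cases S) (auto simp: ray_def)
  ultimately show False
    using assms(1) \<open>ray S = {}\<close> unfolding maximal_solution_def by blast
qed

locale tail_solution =
  fixes n :: nat and lam :: real and w x y :: "real \<Rightarrow> real" and a :: real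
  assumes n_ge_2: "n \<ge> 2" and lam_pos: "lam > 0"
    and solution: "is_solution n lam w x y {a..}"
    and w_pos: "\<And>t. a \<le> t \<Longrightarrow> w t > 0"
    and x_bounds: "\<And>t. a \<le> t \<Longrightarrow> -1 < x t \<and> x t < 1"
    and w_integral_infinite:
      "\<And>t0. a \<le> t0 \<Longrightarrow> (\<integral>\<^sup>+ s. ennreal (w s) * indicator {t0..} s \<partial>lborel) = \<infinity>"
begin

lemma w_deriv: "a \<le> t \<Longrightarrow> (w has_real_derivative (x t * w t)) (at t)"
  and x_deriv: "a \<le> t \<Longrightarrow>
    (x has_real_derivative (x t ^ 2 - x t * y t + real n - 1 - lam * w t ^ 2)) (at t)"
  and y_deriv: "a \<le> t \<Longrightarrow>
    (y has_real_derivative (x t * y t - real n * x t ^ 2 - lam * w t ^ 2)) (at t)"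
  using solution by (auto simp: is_solution_def)

lemma continuous_on_w: "a \<le> t0 \<Longrightarrow> continuous_on {t0..} w"
  using w_deriv by (intro continuous_at_imp_continuous_on) (meson DERIV_isCont atLeast_iff order_trans)

lemma ratio_deriv:
  assumes "a \<le> t"
  shows "((\<lambda>t. y t / w t) has_real_derivative - (real n * x t ^ 2 + lam * w t ^ 2) / w t) (at t)"
proof -
  have "((\<lambda>t. y t / w t) has_real_derivative
      ((x t * y t - real n * x t ^ 2 - lam * w t ^ 2) * w t - y t * (x t * w t)) / (w t * w t)) (at t)"
    using w_pos[OF assms] by (intro DERIV_divide y_deriv w_deriv assms) simp
  moreover have "((x t * y t - real n * x t ^ 2 - lam * w t ^ 2) * w t - y t * (x t * w t)) / (w t * w t)
      = - (real n * x t ^ 2 + lam * w t ^ 2) / w t"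
    using w_pos[OF assms] by (simp add: field_simps power2_eq_square)
  ultimately show ?thesis
    by simp
qed

lemma ratio_deriv_le: "a \<le> t \<Longrightarrow> - (real n * x t ^ 2 + lam * w t ^ 2) / w t \<le> - lam * w t"
  using w_pos[of t] by (simp add: field_simps power2_eq_square)

lemma ratio_antimono:
  assumes "a \<le> t1" "t1 \<le> t2"
  shows "y t2 / w t2 \<le> y t1 / w t1"
proof (rule DERIV_nonpos_imp_nonincreasing[OF \<open>t1 \<le> t2\<close>])
  fix t assume "t1 \<le> t"
  then have "a \<le> t"
    using assms by simp
  moreover have "- lam * w t \<le> 0"
    using lam_pos w_pos[OF \<open>a \<le> t\<close>] by simp
  ultimately show "\<exists>d. ((\<lambda>t. y t / w t) has_real_derivative d) (at t) \<and> d \<le> 0"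
    using ratio_deriv ratio_deriv_le by (meson order_trans)
qed

lemma ratio_unbounded_below: "\<exists>t\<ge>a. y t / w t < c"
proof (rule ccontr)
  assume "\<not> (\<exists>t\<ge>a. y t / w t < c)"
  then have bound: "- (y t / w t) / lam \<le> - c / lam" if "a \<le> t" for t
    using that lam_pos by (intro divide_right_mono) auto
  have "(\<integral>\<^sup>+ s. ennreal (w s) * indicator {a..} s \<partial>lborel) \<noteq> \<infinity>"
  proof (rule nn_integral_Ici_finite_by_antiderivative[OF continuous_on_w _ _ _ bound])
    show "0 \<le> w s" if "a \<le> s" for s
      using w_pos[OF that] by simp
    show "w s \<le> - (- (real n * x s ^ 2 + lam * w s ^ 2) / w s) / lam" if "a \<le> s" for s
      using ratio_deriv_le[OF that] w_pos[OF that] lam_pos by (simp add: field_simps)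
    show "((\<lambda>t. - (y t / w t) / lam) has_real_derivative
        - (- (real n * x s ^ 2 + lam * w s ^ 2) / w s) / lam) (at s)" if "a \<le> s" for s
      by (intro DERIV_cdivide DERIV_minus ratio_deriv that)
  qed simp_all
  then show False
    using w_integral_infinite by simp
qed

lemma ratio_tendsto_at_bot: "filterlim (\<lambda>t. y t / w t) at_bot at_top"
  unfolding filterlim_at_bot_dense eventually_at_top_linorder
proof
  fix c
  obtain t0 where "a \<le> t0" "y t0 / w t0 < c"
    using ratio_unbounded_below by blast
  then show "\<exists>t0. \<forall>t\<ge>t0. y t / w t < c"
    by (meson ratio_antimono le_less_trans)
qed

lemma y_eventually_neg: "eventually (\<lambda>t. y t < 0) at_top"
proof -
  have "eventually (\<lambda>t. y t / w t < 0 \<and> a \<le> t) at_top"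
    using ratio_tendsto_at_bot eventually_ge_at_top
    by (auto simp: filterlim_at_bot_dense intro: eventually_conj)
  then show ?thesis
    by eventually_elim (auto simp: divide_less_0_iff dest: w_pos)
qed

definition w_crit :: real where
  "w_crit = sqrt ((real n - 1) / (4 * lam))"

text \<open>In time \<open>2\<close> the factor \<open>w\<close> grows at most by \<open>exp 2\<close>, while a nonnegative
  \<open>x\<close> grows by at least \<open>1\<close> as long as \<open>w \<le> w_crit\<close>.\<close>
definition w_floor :: real where
  "w_floor = w_crit * exp (-2)"

definition lyapunov :: "real \<Rightarrow> real" where
  "lyapunov t = - y t - x t + (real n - 1) * ln (w t)"

lemma w_crit_pos: "w_crit > 0"
  using n_ge_2 lam_pos by (simp add: w_crit_def)

lemma w_floor_pos: "w_floor > 0"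
  using w_crit_pos by (simp add: w_floor_def)

lemma w_floor_le_crit: "w_floor \<le> w_crit"
  using w_crit_pos by (simp add: w_floor_def mult_left_le)

lemma lam_w_sq_le:
  assumes "a \<le> t" "w t \<le> w_crit"
  shows "lam * w t ^ 2 \<le> (real n - 1) / 4"
proof -
  have "w t ^ 2 \<le> w_crit ^ 2"
    using w_pos[OF assms(1)] assms(2) by (intro power_mono) auto
  then have "lam * w t ^ 2 \<le> lam * w_crit ^ 2"
    using lam_pos by simp
  also have "\<dots> = (real n - 1) / 4"
    using n_ge_2 lam_pos by (simp add: w_crit_def)
  finally show ?thesis .
qed

lemma w_growth:
  assumes "a \<le> t" "t \<le> s"
  shows "w s \<le> w t * exp (s - t)"
proof (rule DERIV_le_self_imp_exp_bound[OF \<open>t \<le> s\<close>])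
  fix r assume "t \<le> r" "r \<le> s"
  with assms have "a \<le> r"
    by simp
  then show "(w has_real_derivative x r * w r) (at r) \<and> x r * w r \<le> w r"
    using w_deriv w_pos[of r] x_bounds[of r] by (simp add: mult_le_cancel_right1)
qed

lemma x_neg_if_w_small:
  assumes "a \<le> t" and y_neg: "\<And>s. t \<le> s \<Longrightarrow> y s < 0" and "w t < w_floor"
  shows "x t < 0"
proof (rule ccontr)
  assume "\<not> x t < 0"
  have "x (t + 2) - (t + 2 - t) / 2 \<ge> 0"
  proof (rule DERIV_nonneg_barrier[where f = "\<lambda>s. x s - (s - t) / 2"])
    show "((\<lambda>s. x s - (s - t) / 2) has_real_derivative
        (x s ^ 2 - x s * y s + real n - 1 - lam * w s ^ 2) - 1 / 2) (at s)" if "s \<in> {t..t + 2}" for s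
      using that \<open>a \<le> t\<close> by (auto intro!: derivative_eq_intros x_deriv)
    show "0 < x s ^ 2 - x s * y s + real n - 1 - lam * w s ^ 2 - 1 / 2"
      if s: "s \<in> {t..<t + 2}" "x s - (s - t) / 2 \<ge> 0" for s
    proof -
      have "a \<le> s" "x s \<ge> 0"
        using s \<open>a \<le> t\<close> by auto
      have "w s \<le> w t * exp (s - t)"
        using w_growth \<open>a \<le> t\<close> s by simp
      also have "\<dots> \<le> w_floor * exp 2"
        using s \<open>w t < w_floor\<close> w_pos[OF \<open>a \<le> t\<close>] by (intro mult_mono) auto
      also have "\<dots> = w_crit"
        by (simp add: w_floor_def exp_minus)
      finally have "lam * w s ^ 2 \<le> (real n - 1) / 4"
        using lam_w_sq_le \<open>a \<le> s\<close> by simp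
      moreover have "x s * y s \<le> 0"
        using \<open>x s \<ge> 0\<close> y_neg[of s] s by (intro mult_nonneg_nonpos) auto
      moreover have "real n \<ge> 2"
        using n_ge_2 by simp
      ultimately show ?thesis
        using zero_le_power2[of "x s"] by argo
    qed
  qed (use \<open>\<not> x t < 0\<close> in auto)
  with x_bounds[of "t + 2"] \<open>a \<le> t\<close> show False
    by simp
qed

lemma w_small_persists:
  assumes "a \<le> t" and y_neg: "\<And>s. t \<le> s \<Longrightarrow> y s < 0" and "w t < w_floor" and "t \<le> s"
  shows "w s < w_floor"
proof -
  define c where "c = (w t + w_floor) / 2"
  have "c - w s \<ge> 0"
  proof (rule DERIV_nonneg_barrier[where f = "\<lambda>s. c - w s", OF \<open>t \<le> s\<close>])
    show "((\<lambda>s. c - w s) has_real_derivative - (x r * w r)) (at r)" if "r \<in> {t..s}" for r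
      using that \<open>a \<le> t\<close> by (auto intro!: derivative_eq_intros w_deriv)
    show "0 < - (x r * w r)" if r: "r \<in> {t..<s}" "c - w r \<ge> 0" for r
    proof -
      have "a \<le> r" "w r < w_floor"
        using r \<open>a \<le> t\<close> \<open>w t < w_floor\<close> by (auto simp: c_def)
      then have "x r < 0"
        using r y_neg by (intro x_neg_if_w_small) auto
      with w_pos[OF \<open>a \<le> r\<close>] show ?thesis
        by (simp add: mult_neg_pos)
    qed
  qed (use \<open>w t < w_floor\<close> in \<open>simp add: c_def\<close>)
  with \<open>w t < w_floor\<close> show ?thesis
    by (simp add: c_def)
qed

lemma lyapunov_deriv:
  assumes "a \<le> t"
  shows "(lyapunov has_real_derivative
    (real n - 1) * (x t * (x t + 1) - 1) + 2 * (lam * w t ^ 2)) (at t)"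
proof -
  have "(lyapunov has_real_derivative
      - (x t * y t - real n * x t ^ 2 - lam * w t ^ 2) - (x t ^ 2 - x t * y t + real n - 1 - lam * w t ^ 2)
      + (real n - 1) * (x t * w t / w t)) (at t)"
    unfolding lyapunov_def[abs_def] using w_pos[OF assms]
    by (auto intro!: derivative_eq_intros y_deriv[OF assms] x_deriv[OF assms] w_deriv[OF assms])
  moreover have "- (x t * y t - real n * x t ^ 2 - lam * w t ^ 2)
      - (x t ^ 2 - x t * y t + real n - 1 - lam * w t ^ 2) + (real n - 1) * (x t * w t / w t)
      = (real n - 1) * (x t * (x t + 1) - 1) + 2 * (lam * w t ^ 2)"
    using w_pos[OF assms] by (simp add: field_simps power2_eq_square)
  ultimately show ?thesis
    by metis
qed

lemma lyapunov_decay: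
  assumes "a \<le> t" and y_neg: "\<And>s. t \<le> s \<Longrightarrow> y s < 0" and "w t < w_floor" and "t \<le> s"
  shows "lyapunov s \<le> lyapunov t - (real n - 1) / 2 * (s - t)"
proof -
  have "lyapunov s + (real n - 1) / 2 * (s - t) \<le> lyapunov t + (real n - 1) / 2 * (t - t)"
  proof (rule DERIV_nonpos_imp_nonincreasing[OF \<open>t \<le> s\<close>])
    fix r assume r: "t \<le> r" "r \<le> s"
    have "a \<le> r"
      using \<open>a \<le> t\<close> r by simp
    have "w r < w_floor"
      using w_small_persists[OF \<open>a \<le> t\<close> y_neg \<open>w t < w_floor\<close>] r by simp
    have "x r < 0"
      using \<open>a \<le> r\<close> \<open>w r < w_floor\<close> y_neg r by (intro x_neg_if_w_small) auto
    define d where "d = (real n - 1) * (x r * (x r + 1) - 1) + 2 * (lam * w r ^ 2) + (real n - 1) / 2"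
    have "((\<lambda>s. lyapunov s + (real n - 1) / 2 * (s - t)) has_real_derivative d) (at r)"
      unfolding d_def by (auto intro!: derivative_eq_intros lyapunov_deriv[OF \<open>a \<le> r\<close>])
    moreover have "d \<le> 0"
    proof -
      have "x r * (x r + 1) \<le> 0"
        using \<open>x r < 0\<close> x_bounds[OF \<open>a \<le> r\<close>] by (intro mult_nonpos_nonneg) auto
      then have "(real n - 1) * (x r * (x r + 1) - 1) \<le> (real n - 1) * (- 1)"
        using n_ge_2 by (intro mult_left_mono) auto
      moreover have "lam * w r ^ 2 \<le> (real n - 1) / 4"
        using lam_w_sq_le[OF \<open>a \<le> r\<close>] \<open>w r < w_floor\<close> w_floor_le_crit by simp
      ultimately show ?thesis
        unfolding d_def by argo
    qed
    ultimately show "\<exists>d. ((\<lambda>s. lyapunov s + (real n - 1) / 2 * (s - t)) has_real_derivative d) (at r)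
        \<and> d \<le> 0"
      by blast
  qed
  then show ?thesis
    by simp
qed

lemma w_exp_decay:
  assumes "a \<le> t" and y_neg: "\<And>s. t \<le> s \<Longrightarrow> y s < 0" and "w t < w_floor" and "t \<le> s"
  shows "w s \<le> exp (lyapunov t / (real n - 1)) * exp (- (1 / 2) * (s - t))"
proof -
  have "a \<le> s"
    using assms by simp
  have "w s < w_floor"
    using w_small_persists[OF \<open>a \<le> t\<close> y_neg \<open>w t < w_floor\<close> \<open>t \<le> s\<close>] .
  have "x s < 0"
    using \<open>a \<le> s\<close> \<open>w s < w_floor\<close> y_neg \<open>t \<le> s\<close> by (intro x_neg_if_w_small) auto
  then have "(real n - 1) * ln (w s) \<le> lyapunov s"
    using y_neg[OF \<open>t \<le> s\<close>] by (simp add: lyapunov_def)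
  also have "\<dots> \<le> lyapunov t - (real n - 1) / 2 * (s - t)"
    by (rule lyapunov_decay[OF assms])
  also have "\<dots> = (real n - 1) * (lyapunov t / (real n - 1) + - (1 / 2) * (s - t))"
    using n_ge_2 by (simp add: field_simps)
  finally have "ln (w s) \<le> lyapunov t / (real n - 1) + - (1 / 2) * (s - t)"
    using n_ge_2 by (subst (asm) mult_le_cancel_left_pos) auto
  then have "exp (ln (w s)) \<le> exp (lyapunov t / (real n - 1) + - (1 / 2) * (s - t))"
    by simp
  then show ?thesis
    using w_pos[OF \<open>a \<le> s\<close>] by (simp flip: exp_add)
qed

lemma w_ge_floor:
  assumes "a \<le> t0" and y_neg: "\<And>s. t0 \<le> s \<Longrightarrow> y s < 0" and "t0 \<le> t"
  shows "w_floor \<le> w t"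
proof (rule ccontr)
  assume "\<not> w_floor \<le> w t"
  then have "w t < w_floor"
    by simp
  have "a \<le> t" and y_neg_t: "\<And>s. t \<le> s \<Longrightarrow> y s < 0"
    using assms by auto
  have "(\<integral>\<^sup>+ s. ennreal (w s) * indicator {t..} s \<partial>lborel) \<noteq> \<infinity>"
  proof (rule nn_integral_Ici_finite_if_exp_decay[where k = "1 / 2"])
    show "continuous_on {t..} w"
      using \<open>a \<le> t\<close> by (rule continuous_on_w)
    show "0 \<le> w s" if "t \<le> s" for s
      using w_pos[of s] that \<open>a \<le> t\<close> by simp
    show "w s \<le> exp (lyapunov t / (real n - 1)) * exp (- (1 / 2) * (s - t))" if "t \<le> s" for s
      by (rule w_exp_decay[OF \<open>a \<le> t\<close> y_neg_t \<open>w t < w_floor\<close> that])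
  qed simp
  with w_integral_infinite[OF \<open>a \<le> t\<close>] show False
    by simp
qed

lemma w_eventually_ge_floor: "eventually (\<lambda>t. w_floor \<le> w t) at_top"
proof -
  obtain T where "\<And>t. T \<le> t \<Longrightarrow> y t < 0"
    using y_eventually_neg by (auto simp: eventually_at_top_linorder)
  then show ?thesis
    unfolding eventually_at_top_linorder
    by (intro exI[of _ "max a T"]) (auto intro: w_ge_floor[of "max a T"])
qed

lemma y_tendsto_at_bot: "filterlim y at_bot at_top"
  unfolding filterlim_at_bot
proof
  fix Z :: real
  define M where "M = min 0 (Z / w_floor)"
  have "eventually (\<lambda>t. y t / w t \<le> M \<and> w_floor \<le> w t \<and> a \<le> t) at_top"
    using ratio_tendsto_at_bot[unfolded filterlim_at_bot, rule_format, of M]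
      w_eventually_ge_floor eventually_ge_at_top[of a]
    by eventually_elim simp
  then show "eventually (\<lambda>t. y t \<le> Z) at_top"
  proof eventually_elim
    case (elim t)
    then have "y t = y t / w t * w t"
      using w_pos[of t] by simp
    also have "\<dots> \<le> M * w t"
      using elim w_pos[of t] by (intro mult_right_mono) auto
    also have "\<dots> \<le> M * w_floor"
      using elim by (intro mult_left_mono_neg) (auto simp: M_def)
    also have "\<dots> \<le> Z"
      using w_floor_pos by (simp add: M_def min_def field_simps)
    finally show ?case .
  qed
qed

end

theorem lemma3p8:
  fixes n :: nat and lam :: real and S :: ereal
    and w x y :: "real \<Rightarrow> real"
  assumes "n \<ge> 2" and "lam > 0"
    and "maximal_solution n lam w x y S"
    and "\<forall>t\<in>ray S. w t > 0"
    and "\<forall>t0\<in>ray S. (\<integral>\<^sup>+ s. ennreal (w s) * indicator {t0..} s \<partial>lborel) = \<infinity>"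
    and "\<forall>t\<in>ray S. -1 < x t \<and> x t < 1"
  shows "filterlim y at_bot at_top"
proof -
  obtain a where "a \<in> ray S"
    using maximal_solution_ray_nonempty assms(1-3) by fastforce
  then have ray: "{a..} \<subseteq> ray S"
    by (auto simp: ray_def intro: less_le_trans)
  interpret tail_solution n lam w x y a
  proof
    show "is_solution n lam w x y {a..}"
      using assms(3) ray by (auto simp: maximal_solution_def is_solution_def)
  qed (use assms ray in auto)
  show ?thesis
    by (rule y_tendsto_at_bot)
qed

end
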